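(* Let $\mathbb{F}\in\{\mathbb{R},\mathbb{C}\}$, let $\{\varphi_i\}_{i=1}^M$ be a Parseval frame for $\mathbb{F}^N$, and let $0<k\leq N$. Assume that all $k$-element subsets of the frame span parallelotopes of the same $k$-dimensional volume, i.e. $v_k(\Phi_K)$ is the same for all $K\subseteq[M]$ with $|K|=k$. Then all $(k-1)$-element subsets also span parallelotopes of the same $(k-1)$-dimensional volume, i.e. $v_{k-1}(\Phi_J)$ is the same for all $J\subseteq[M]$ with $|J|=k-1$.
   Context: A Parseval frame for $\mathbb{F}^N$ is a family $\{\varphi_i\}_{i=1}^M\subseteq\mathbb{F}^N$ whose $N\times M$ matrix $\Phi$ (columns $\varphi_i$) satisfies $\Phi\Phi^*=I$. For $K\subseteq[M]$, $\Phi_K$ is the submatrix of columns indexed by $K$, and for an $N\times m$ matrix $F$ with $m\le N$, $v_m(F)=\sqrt{\det(F^*F)}$ (with $v_0=1$). *)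

theory Defs
  imports "Jordan_Normal_Form.Schur_Decomposition" "Jordan_Normal_Form.DL_Submatrix"
begin

text \<open>A Parseval frame for F^N with M vectors: the N x M synthesis matrix Phi
  (columns = frame vectors, indexed 0..M-1) satisfies Phi Phi^* = I.\<close>
definition parseval_frame :: "'a::conjugatable_field mat \<Rightarrow> nat \<Rightarrow> nat \<Rightarrow> bool" where
  "parseval_frame \<Phi> N M \<longleftrightarrow> \<Phi> \<in> carrier_mat N M \<and> \<Phi> * mat_adjoint \<Phi> = 1\<^sub>m N"

definition col_submatrix :: "'a mat \<Rightarrow> nat set \<Rightarrow> 'a mat" where
  "col_submatrix \<Phi> K = submatrix \<Phi> {0..<dim_row \<Phi>} K"

text \<open>v_m(F) = sqrt(det(F^* F)); over C the determinant is a nonnegative real,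
  so we take its real part.  For m = 0 the 0x0 determinant is 1, so v_0 = 1.\<close>
definition vol_real :: "real mat \<Rightarrow> real" where
  "vol_real F = sqrt (det (mat_adjoint F * F))"

definition vol_complex :: "complex mat \<Rightarrow> real" where
  "vol_complex F = sqrt (Re (det (mat_adjoint F * F)))"

end

theory Submission
  imports Defs
begin

text \<open>The Gram matrix G = \<Phi>^* \<Phi> of a Parseval frame is an orthogonal projection of
  trace N, and v(\<Phi>_K)^2 is its principal minor det G[K].  Expanding det G[J \<union> {i}] along
  the bordering row and column and summing over i \<notin> J, the identity G^2 = G collapses the
  cofactor terms to
    \<Sum>_(i \<notin> J) det G[J \<union> {i}] = (N - |J|) det G[J].
  If all minors of size k equal D, then for |J| = k - 1 this reads
  (M - k + 1) D = (N - k + 1) det G[J] with N - k + 1 > 0, so det G[J] does not depend on J.\<close>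

lemma bij_betw_fun_upd_insert:
  assumes "bij_betw f A B" and "x \<notin> A" and "y \<notin> B"
  shows "bij_betw (f(x := y)) (insert x A) (insert y B)"
proof -
  have "bij_betw (f(x := y)) A B"
    using assms(1) by (rule bij_betw_cong[THEN iffD1, rotated]) (use assms(2) in auto)
  then show ?thesis
    using notIn_Un_bij_betw3[of x A "f(x := y)" B] assms(2,3) by simp
qed

lemma bij_betw_pick:
  assumes "finite K"
  shows "bij_betw (pick K) {0..<card K} K"
proof -
  have "strict_mono_on {0..<card K} (pick K)"
    by (rule strict_mono_onI) (auto intro: pick_mono)
  then have inj: "inj_on (pick K) {0..<card K}"
    by (rule strict_mono_on_imp_inj_on)
  moreover have "pick K ` {0..<card K} \<subseteq> K"
    using pick_in_set by auto
  ultimately have "pick K ` {0..<card K} = K"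
    using card_subset_eq[OF assms] card_image[OF inj] by simp
  with inj show ?thesis by (simp add: bij_betw_def)
qed

lemma pick_atLeast0_lessThan:
  assumes "t < n"
  shows "pick {0..<n} t = t"
proof -
  have "{a \<in> {0..<n}. a < t} = {0..<t}" using assms by auto
  then show ?thesis using pick_card_in_set[of t "{0..<n}"] assms by simp
qed

definition trace :: "'a::comm_ring_1 mat \<Rightarrow> 'a" where
  "trace A = (\<Sum>i<dim_row A. A $$ (i,i))"

lemma trace_one_mat [simp]: "trace (1\<^sub>m n) = of_nat n"
  by (simp add: trace_def)

lemma trace_minus_mat:
  assumes "A \<in> carrier_mat n n" and "B \<in> carrier_mat n n"
  shows "trace (A - B) = trace A - trace B"
  using assms by (simp add: trace_def sum_subtractf)

lemma trace_mult_comm: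
  fixes A :: "'a::comm_ring_1 mat"
  assumes "A \<in> carrier_mat n m" and "B \<in> carrier_mat m n"
  shows "trace (A * B) = trace (B * A)"
proof -
  have "trace (A * B) = (\<Sum>i<n. \<Sum>j<m. A $$ (i,j) * B $$ (j,i))"
    using assms by (simp add: trace_def scalar_prod_def lessThan_atLeast0)
  also have "\<dots> = (\<Sum>j<m. \<Sum>i<n. B $$ (j,i) * A $$ (i,j))"
    by (subst sum.swap) (simp add: mult.commute)
  also have "\<dots> = trace (B * A)"
    using assms by (simp add: trace_def scalar_prod_def lessThan_atLeast0)
  finally show ?thesis .
qed

lemma det_bordered:
  fixes X :: "'a::comm_ring_1 mat"
  assumes X: "X \<in> carrier_mat (Suc m) (Suc m)"
  shows "det X = X $$ (m,m) * det (mat_delete X m m)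
    - (\<Sum>i<m. \<Sum>l<m. X $$ (i,m) * X $$ (m,l) * cofactor (mat_delete X m m) i l)"
proof -
  have "det X = (\<Sum>i<Suc m. X $$ (i,m) * cofactor X i m)"
    by (rule laplace_expansion_column[OF X]) simp
  moreover have "cofactor X m m = det (mat_delete X m m)"
    by (simp add: cofactor_def)
  moreover have "X $$ (i,m) * cofactor X i m
      = - (\<Sum>l<m. X $$ (i,m) * X $$ (m,l) * cofactor (mat_delete X m m) i l)" if i: "i < m" for i
  proof -
    obtain m' where m: "m = Suc m'" using i by (cases m) auto
    define Y where "Y = mat_delete X i m"
    have Y: "Y \<in> carrier_mat m m" unfolding Y_def using mat_delete_carrier[OF X] by auto
    have Y_last_row: "Y $$ (m',l) = X $$ (m,l)" if "l < m" for l
      using i that X m unfolding Y_def mat_delete_def by auto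
    have Y_minor: "mat_delete Y m' l = mat_delete (mat_delete X m m) i l" if "l < m" for l
      using i that X m unfolding Y_def mat_delete_def by (auto intro!: eq_matI)
    have "(-1::'a) ^ m' * (-1) ^ m' = 1"
      by (simp flip: power_mult_distrib)
    then have sign: "(-1::'a) ^ (i + m) * (-1) ^ (m' + l) = - ((-1) ^ (i + l))" for l
      by (simp add: m power_add algebra_simps)
    have "det Y = (\<Sum>l<m. X $$ (m,l) * ((-1) ^ (m' + l) * det (mat_delete (mat_delete X m m) i l)))"
      using laplace_expansion_row[OF Y, of m'] by (simp add: m Y_last_row Y_minor cofactor_def)
    then have "X $$ (i,m) * cofactor X i m = (\<Sum>l<m. X $$ (i,m) * X $$ (m,l)
        * ((-1) ^ (i + m) * (-1) ^ (m' + l)) * det (mat_delete (mat_delete X m m) i l))"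
      by (simp add: cofactor_def Y_def[symmetric] sum_distrib_left algebra_simps)
    also have "\<dots> = - (\<Sum>l<m. X $$ (i,m) * X $$ (m,l) * cofactor (mat_delete X m m) i l)"
      by (simp add: sign cofactor_def mult.assoc flip: sum_negf)
    finally show ?thesis .
  qed
  ultimately show ?thesis by (simp add: sum_negf)
qed

lemma sum_cofactor_mult_eq_det_trace:
  fixes B :: "'a::comm_ring_1 mat"
  assumes B: "B \<in> carrier_mat m m" and C: "C \<in> carrier_mat m m"
  shows "(\<Sum>r<m. \<Sum>l<m. cofactor B r l * (B * C) $$ (r,l)) = det B * trace C"
proof -
  have "(\<Sum>r<m. \<Sum>l<m. cofactor B r l * (B * C) $$ (r,l)) = trace (adj_mat B * (B * C))"
    using B C by (subst sum.swap)
      (simp add: trace_def adj_mat_def scalar_prod_def lessThan_atLeast0)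
  also have "adj_mat B * (B * C) = det B \<cdot>\<^sub>m C"
    using B C adj_mat[OF B]
    by (simp add: assoc_mult_mat[symmetric, of _ m m] mult_smult_assoc_mat[of _ m m])
  finally show ?thesis
    using C by (simp add: trace_def sum_distrib_left)
qed

definition principal_mat :: "'a mat \<Rightarrow> nat \<Rightarrow> (nat \<Rightarrow> nat) \<Rightarrow> 'a mat" where
  "principal_mat A n f = mat n n (\<lambda>(r,s). A $$ (f r, f s))"

lemma det_permute_rows_cols:
  fixes B :: "'a::comm_ring_1 mat"
  assumes B: "B \<in> carrier_mat n n" and p: "p permutes {0..<n}"
  shows "det (mat n n (\<lambda>(r,s). B $$ (p r, p s))) = det B"
proof -
  define Z where "Z = mat n n (\<lambda>(r,s). B $$ (p r, s))"
  have Z: "Z \<in> carrier_mat n n" by (simp add: Z_def)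
  have pn: "p r < n" if "r < n" for r using permutes_in_image[OF p] that by auto
  have "mat n n (\<lambda>(r,s). B $$ (p r, p s))
      = transpose_mat (mat n n (\<lambda>(r,s). transpose_mat Z $$ (p r, s)))"
    by (rule eq_matI) (auto simp: Z_def pn)
  then have "det (mat n n (\<lambda>(r,s). B $$ (p r, p s)))
      = det (mat n n (\<lambda>(r,s). transpose_mat Z $$ (p r, s)))"
    by (simp add: det_transpose[of _ n])
  also have "\<dots> = signof p * det Z"
    using det_permute_rows[of "transpose_mat Z", OF _ p] Z by (simp add: det_transpose)
  also have "\<dots> = signof p * signof p * det B"
    using det_permute_rows[OF B p] by (simp add: Z_def)
  finally show ?thesis by (simp add: sign_def)
qed

lemma det_principal_mat_bij_betw:
  fixes A :: "'a::comm_ring_1 mat"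
  assumes f: "bij_betw f {0..<n} S" and g: "bij_betw g {0..<n} S"
  shows "det (principal_mat A n g) = det (principal_mat A n f)"
proof -
  define p where "p r = (if r < n then inv_into {0..<n} f (g r) else r)" for r
  have "bij_betw (inv_into {0..<n} f \<circ> g) {0..<n} {0..<n}"
    using bij_betw_trans[OF g bij_betw_inv_into[OF f]] .
  then have "bij_betw p {0..<n} {0..<n}"
    by (rule bij_betw_cong[THEN iffD1, rotated]) (auto simp: p_def)
  then have p: "p permutes {0..<n}"
    by (rule bij_imp_permutes) (auto simp: p_def)
  have "f (p r) = g r" if "r < n" for r
  proof -
    have "g r \<in> f ` {0..<n}" using that f g by (auto simp: bij_betw_def)
    then show ?thesis using that by (simp add: p_def f_inv_into_f)
  qed
  then have "principal_mat A n g = mat n n (\<lambda>(r,s). principal_mat A n f $$ (p r, p s))"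
    using permutes_in_image[OF p] by (auto intro!: eq_matI simp: principal_mat_def)
  moreover have "principal_mat A n f \<in> carrier_mat n n"
    by (simp add: principal_mat_def)
  ultimately show ?thesis
    using det_permute_rows_cols[OF _ p] by simp
qed

lemma submatrix_eq_principal_mat:
  assumes A: "A \<in> carrier_mat n n" and K: "K \<subseteq> {0..<n}"
  shows "submatrix A K K = principal_mat A (card K) (pick K)"
proof -
  have "{i. i < n \<and> i \<in> K} = K" using K by auto
  then show ?thesis
    using A by (auto intro!: eq_matI simp: submatrix_def principal_mat_def)
qed

lemma det_principal_mat_border:
  fixes A :: "'a::comm_ring_1 mat"
  shows "det (principal_mat A (Suc m) (f(m := i)))
    = A $$ (i,i) * det (principal_mat A m f)
      - (\<Sum>r<m. \<Sum>l<m. cofactor (principal_mat A m f) r l * (A $$ (f r, i) * A $$ (i, f l)))"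
proof -
  define X where "X = principal_mat A (Suc m) (f(m := i))"
  have X: "X \<in> carrier_mat (Suc m) (Suc m)" by (simp add: X_def principal_mat_def)
  have "mat_delete X m m = principal_mat A m f"
    by (rule eq_matI) (auto simp: X_def principal_mat_def mat_delete_def)
  then show ?thesis
    unfolding X_def[symmetric] det_bordered[OF X]
    by (auto intro!: sum.cong simp: X_def principal_mat_def algebra_simps)
qed

text \<open>Since A is idempotent, summing the cofactor terms of the bordered minors over the
  border index i produces the entries of B (1 - B), B the principal submatrix on J; the
  adjugate identity then adds them up to det B * trace (1 - B).\<close>
lemma sum_det_principal_mat_border_idempotent:
  fixes A :: "'a::comm_ring_1 mat"
  assumes A: "A \<in> carrier_mat M M" and idem: "A * A = A"
    and J: "J \<subseteq> {0..<M}" and f: "bij_betw f {0..<m} J"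
  shows "(\<Sum>i\<in>{0..<M} - J. det (principal_mat A (Suc m) (f(m := i))))
    = (trace A - of_nat m) * det (principal_mat A m f)"
proof -
  define B where "B = principal_mat A m f"
  have B: "B \<in> carrier_mat m m" by (simp add: B_def principal_mat_def)
  have fM: "f r < M" if "r < m" for r
    using bij_betwE[OF f] J that by (meson atLeastLessThan_iff le0 subsetD)
  have outside_J: "(\<Sum>i\<in>{0..<M} - J. h i) = (\<Sum>i<M. h i) - (\<Sum>r<m. h (f r))" for h :: "nat \<Rightarrow> 'a"
  proof -
    have "(\<Sum>i\<in>J. h i) = (\<Sum>r<m. h (f r))"
      using sum.reindex_bij_betw[OF f, of h] by (simp add: lessThan_atLeast0)
    moreover have "(\<Sum>i\<in>{0..<M} - J. h i) = (\<Sum>i<M. h i) - (\<Sum>i\<in>J. h i)"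
      using sum_diff[OF _ J, of h] by (simp add: lessThan_atLeast0)
    ultimately show ?thesis by simp
  qed
  have diag: "(\<Sum>i\<in>{0..<M} - J. A $$ (i,i)) = trace A - trace B"
    using A by (simp add: outside_J trace_def B_def principal_mat_def)
  have off_diag: "(\<Sum>i\<in>{0..<M} - J. A $$ (f r, i) * A $$ (i, f l)) = (B * (1\<^sub>m m - B)) $$ (r,l)"
    if r: "r < m" and l: "l < m" for r l
  proof -
    have "(\<Sum>i<M. A $$ (f r, i) * A $$ (i, f l)) = (A * A) $$ (f r, f l)"
      using A fM r l by (simp add: scalar_prod_def lessThan_atLeast0)
    also have "\<dots> = B $$ (r,l)"
      using r l by (simp add: idem B_def principal_mat_def)
    finally have "(\<Sum>i<M. A $$ (f r, i) * A $$ (i, f l)) = B $$ (r,l)" .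
    moreover have "(\<Sum>p<m. A $$ (f r, f p) * A $$ (f p, f l)) = (B * B) $$ (r,l)"
      using r l by (simp add: B_def principal_mat_def scalar_prod_def lessThan_atLeast0)
    moreover have "B * (1\<^sub>m m - B) = B - B * B"
      using mult_minus_distrib_mat[OF B one_carrier_mat B] B by simp
    ultimately show ?thesis
      using B r l by (simp add: outside_J)
  qed
  have "(\<Sum>i\<in>{0..<M} - J. det (principal_mat A (Suc m) (f(m := i))))
      = (\<Sum>i\<in>{0..<M} - J. A $$ (i,i)) * det B
        - (\<Sum>r<m. \<Sum>l<m. cofactor B r l * (\<Sum>i\<in>{0..<M} - J. A $$ (f r, i) * A $$ (i, f l)))"
    unfolding det_principal_mat_border B_def[symmetric] sum_subtractf
    by (simp add: sum_distrib_left sum_distrib_right sum.swap[of _ "{0..<M} - J"])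
  also have "\<dots> = (trace A - trace B) * det B
        - (\<Sum>r<m. \<Sum>l<m. cofactor B r l * (B * (1\<^sub>m m - B)) $$ (r,l))"
    by (simp add: diag off_diag)
  also have "\<dots> = (trace A - trace B) * det B - det B * trace (1\<^sub>m m - B)"
    using sum_cofactor_mult_eq_det_trace[OF B minus_carrier_mat[OF B]] by simp
  also have "\<dots> = (trace A - of_nat m) * det B"
    using B by (simp add: trace_minus_mat[of _ m] algebra_simps)
  finally show ?thesis unfolding B_def .
qed

lemma sum_det_submatrix_insert_idempotent:
  fixes A :: "'a::comm_ring_1 mat"
  assumes A: "A \<in> carrier_mat M M" and idem: "A * A = A" and J: "J \<subseteq> {0..<M}"
  shows "(\<Sum>i\<in>{0..<M} - J. det (submatrix A (insert i J) (insert i J)))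
    = (trace A - of_nat (card J)) * det (submatrix A J J)"
proof -
  have finJ: "finite J" using J finite_subset by blast
  define m where "m = card J"
  have f: "bij_betw (pick J) {0..<m} J" unfolding m_def by (rule bij_betw_pick[OF finJ])
  have "det (submatrix A (insert i J) (insert i J)) = det (principal_mat A (Suc m) ((pick J)(m := i)))"
    if i: "i \<in> {0..<M} - J" for i
  proof -
    have upd: "bij_betw ((pick J)(m := i)) {0..<Suc m} (insert i J)"
      using bij_betw_fun_upd_insert[OF f, of m i] i by (simp add: atLeast0_lessThan_Suc)
    have "bij_betw (pick (insert i J)) {0..<card (insert i J)} (insert i J)"
      using bij_betw_pick finJ by blast
    then have pick: "bij_betw (pick (insert i J)) {0..<Suc m} (insert i J)"
      using finJ i by (simp add: m_def)
    have "submatrix A (insert i J) (insert i J) = principal_mat A (Suc m) (pick (insert i J))"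
      using submatrix_eq_principal_mat[OF A, of "insert i J"] finJ i J by (simp add: m_def)
    then show ?thesis
      using det_principal_mat_bij_betw[OF upd pick] by simp
  qed
  then show ?thesis
    using sum_det_principal_mat_border_idempotent[OF A idem J f]
    by (simp add: submatrix_eq_principal_mat[OF A J] m_def)
qed

lemma dim_mat_adjoint [simp]:
  "dim_row (mat_adjoint A) = dim_col A" "dim_col (mat_adjoint A) = dim_row A"
  by (simp_all add: mat_adjoint_def mat_of_rows_def)

lemma index_mat_adjoint [simp]:
  "i < dim_col A \<Longrightarrow> j < dim_row A \<Longrightarrow> mat_adjoint A $$ (i,j) = conjugate (A $$ (j,i))"
  by (simp add: mat_adjoint_def mat_of_rows_def)

lemma col_submatrix_eq_mat:
  assumes "\<Phi> \<in> carrier_mat N M" and "K \<subseteq> {0..<M}"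
  shows "col_submatrix \<Phi> K = mat N (card K) (\<lambda>(t,s). \<Phi> $$ (t, pick K s))"
proof -
  have "{i. i < N \<and> i \<in> {0..<N}} = {0..<N}" and "{j. j < M \<and> j \<in> K} = K"
    using assms(2) by auto
  then show ?thesis
    using assms by (auto intro!: eq_matI simp: col_submatrix_def submatrix_def pick_atLeast0_lessThan)
qed

lemma gram_col_submatrix:
  fixes \<Phi> :: "'a::conjugatable_field mat"
  assumes \<Phi>: "\<Phi> \<in> carrier_mat N M" and K: "K \<subseteq> {0..<M}"
  shows "mat_adjoint (col_submatrix \<Phi> K) * col_submatrix \<Phi> K = submatrix (mat_adjoint \<Phi> * \<Phi>) K K"
proof -
  have "mat_adjoint \<Phi> * \<Phi> \<in> carrier_mat M M" using \<Phi> by auto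
  moreover have "pick K s < M" if "s < card K" for s
    using pick_in_set[of s K] that K by auto
  ultimately show ?thesis
    using \<Phi> K by (auto intro!: eq_matI simp: col_submatrix_eq_mat submatrix_eq_principal_mat
        principal_mat_def scalar_prod_def)
qed

lemma parseval_frame_gram_idempotent:
  assumes "parseval_frame \<Phi> N M"
  shows "(mat_adjoint \<Phi> * \<Phi>) * (mat_adjoint \<Phi> * \<Phi>) = mat_adjoint \<Phi> * \<Phi>"
proof -
  have \<Phi>: "\<Phi> \<in> carrier_mat N M" and frame: "\<Phi> * mat_adjoint \<Phi> = 1\<^sub>m N"
    using assms by (auto simp: parseval_frame_def)
  have adj: "mat_adjoint \<Phi> \<in> carrier_mat M N" using \<Phi> by auto
  have "(mat_adjoint \<Phi> * \<Phi>) * (mat_adjoint \<Phi> * \<Phi>) = mat_adjoint \<Phi> * ((\<Phi> * mat_adjoint \<Phi>) * \<Phi>)"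
    using \<Phi> adj by (simp add: assoc_mult_mat[of _ M N _ M _ M] assoc_mult_mat[of _ N M _ N _ M])
  then show ?thesis using \<Phi> by (simp add: frame)
qed

lemma parseval_frame_gram_trace:
  assumes "parseval_frame \<Phi> N M"
  shows "trace (mat_adjoint \<Phi> * \<Phi>) = of_nat N"
proof -
  have \<Phi>: "\<Phi> \<in> carrier_mat N M" and frame: "\<Phi> * mat_adjoint \<Phi> = 1\<^sub>m N"
    using assms by (auto simp: parseval_frame_def)
  then have "trace (mat_adjoint \<Phi> * \<Phi>) = trace (\<Phi> * mat_adjoint \<Phi>)"
    by (intro trace_mult_comm[of _ M N]) auto
  then show ?thesis by (simp add: frame)
qed

lemma parseval_frame_sum_gram_det_insert:
  assumes frame: "parseval_frame \<Phi> N M" and J: "J \<subseteq> {0..<M}"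
  shows "(\<Sum>i\<in>{0..<M} - J. det (mat_adjoint (col_submatrix \<Phi> (insert i J)) * col_submatrix \<Phi> (insert i J)))
    = (of_nat N - of_nat (card J)) * det (mat_adjoint (col_submatrix \<Phi> J) * col_submatrix \<Phi> J)"
proof -
  have \<Phi>: "\<Phi> \<in> carrier_mat N M" using frame by (simp add: parseval_frame_def)
  have G: "mat_adjoint \<Phi> * \<Phi> \<in> carrier_mat M M" using \<Phi> by auto
  have "insert i J \<subseteq> {0..<M}" if "i \<in> {0..<M} - J" for i using that J by auto
  then show ?thesis
    using sum_det_submatrix_insert_idempotent[OF G parseval_frame_gram_idempotent[OF frame] J]
    by (simp add: gram_col_submatrix[OF \<Phi>] J parseval_frame_gram_trace[OF frame])
qed

lemma real_sqrt_mult_abs: "sqrt (x * \<bar>x\<bar>) = x"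
  by (cases "x \<ge> 0") (simp_all add: real_sqrt_minus abs_if)

text \<open>Isabelle's sqrt is the odd extension of the square root, a bijection of the reals;
  so equal volumes mean equal Gram determinants, namely c * abs c.\<close>
lemma sqrt_constant_on_card_pred:
  fixes g :: "nat set \<Rightarrow> real"
  assumes insert_sum: "\<And>J. J \<subseteq> {0..<M} \<Longrightarrow>
      (\<Sum>i\<in>{0..<M} - J. g (insert i J)) = (real N - real (card J)) * g J"
    and k: "0 < k" "k \<le> N"
    and const: "\<exists>c. \<forall>K. K \<subseteq> {0..<M} \<longrightarrow> card K = k \<longrightarrow> sqrt (g K) = c"
  shows "\<exists>c. \<forall>J. J \<subseteq> {0..<M} \<longrightarrow> card J = k - 1 \<longrightarrow> sqrt (g J) = c"
proof -
  obtain c where c: "\<And>K. K \<subseteq> {0..<M} \<Longrightarrow> card K = k \<Longrightarrow> sqrt (g K) = c"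
    using const by blast
  have gK: "g K = c * \<bar>c\<bar>" if "K \<subseteq> {0..<M}" "card K = k" for K
    using c[OF that] real_sqrt_mult_abs[of c] by (metis real_sqrt_eq_iff)
  show ?thesis
  proof (intro exI allI impI)
    fix J assume J: "J \<subseteq> {0..<M}" and card_J: "card J = k - 1"
    have finJ: "finite J" using J finite_subset by blast
    have "(\<Sum>i\<in>{0..<M} - J. g (insert i J)) = real (M - (k - 1)) * (c * \<bar>c\<bar>)"
    proof -
      have "g (insert i J) = c * \<bar>c\<bar>" if "i \<in> {0..<M} - J" for i
        using that J finJ card_J k by (intro gK) auto
      then show ?thesis
        using card_J by (simp add: card_Diff_subset[OF finJ J])
    qed
    moreover have "real N - real (k - 1) \<noteq> 0" using k by auto
    ultimately have "g J = real (M - (k - 1)) * (c * \<bar>c\<bar>) / (real N - real (k - 1))"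
      using insert_sum[OF J] card_J by (simp add: field_simps)
    then show "sqrt (g J) = sqrt (real (M - (k - 1)) * (c * \<bar>c\<bar>) / (real N - real (k - 1)))"
      by simp
  qed
qed

theorem theorem9:
  shows "(\<forall>(\<Phi>::real mat) N M k.
            parseval_frame \<Phi> N M \<longrightarrow> 0 < k \<longrightarrow> k \<le> N \<longrightarrow>
            (\<exists>c. \<forall>K. K \<subseteq> {0..<M} \<longrightarrow> card K = k \<longrightarrow> vol_real (col_submatrix \<Phi> K) = c) \<longrightarrow>
            (\<exists>c. \<forall>J. J \<subseteq> {0..<M} \<longrightarrow> card J = k - 1 \<longrightarrow> vol_real (col_submatrix \<Phi> J) = c))
       \<and> (\<forall>(\<Phi>::complex mat) N M k.
            parseval_frame \<Phi> N M \<longrightarrow> 0 < k \<longrightarrow> k \<le> N \<longrightarrow>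
            (\<exists>c. \<forall>K. K \<subseteq> {0..<M} \<longrightarrow> card K = k \<longrightarrow> vol_complex (col_submatrix \<Phi> K) = c) \<longrightarrow>
            (\<exists>c. \<forall>J. J \<subseteq> {0..<M} \<longrightarrow> card J = k - 1 \<longrightarrow> vol_complex (col_submatrix \<Phi> J) = c))"
proof (intro conjI allI impI)
  fix \<Phi> :: "real mat" and N M k :: nat
  assume frame: "parseval_frame \<Phi> N M" and k: "0 < k" "k \<le> N"
    and "\<exists>c. \<forall>K. K \<subseteq> {0..<M} \<longrightarrow> card K = k \<longrightarrow> vol_real (col_submatrix \<Phi> K) = c"
  then show "\<exists>c. \<forall>J. J \<subseteq> {0..<M} \<longrightarrow> card J = k - 1 \<longrightarrow> vol_real (col_submatrix \<Phi> J) = c"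
    unfolding vol_real_def
    by (intro sqrt_constant_on_card_pred[OF _ k])
      (simp_all add: parseval_frame_sum_gram_det_insert[OF frame])
next
  fix \<Phi> :: "complex mat" and N M k :: nat
  assume frame: "parseval_frame \<Phi> N M" and k: "0 < k" "k \<le> N"
    and "\<exists>c. \<forall>K. K \<subseteq> {0..<M} \<longrightarrow> card K = k \<longrightarrow> vol_complex (col_submatrix \<Phi> K) = c"
  then show "\<exists>c. \<forall>J. J \<subseteq> {0..<M} \<longrightarrow> card J = k - 1 \<longrightarrow> vol_complex (col_submatrix \<Phi> J) = c"
    unfolding vol_complex_def
    by (intro sqrt_constant_on_card_pred[OF _ k])
      (simp_all add: parseval_frame_sum_gram_det_insert[OF frame] flip: Re_sum)
qed

end
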